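(* Let $M$ be a smooth manifold, $\nabla$ an affine connection on $TM$ and $\tilde\nabla$ the generalized connection on $E=TM\oplus T^*M$ induced by $\nabla$. The torsions $T^{\tilde\nabla}$ and $T^{\tilde\nabla}_{[\cdot,\cdot]_\nabla}$ are equal, i.e. $T^{\tilde\nabla}(v,w,u)=\langle T^{\tilde\nabla}_{[\cdot,\cdot]_\nabla}(v,w),u\rangle$ for all sections $u,v,w$ of $E$, if and only if both vanish, if and only if $\nabla$ is torsion-free.
   Context: $E$ has sections $X+\xi$, pairing $\langle X+\xi,Y+\eta\rangle=\iota_X\eta+\iota_Y\xi$, Courant bracket $[X+\xi,Y+\eta]_C=[X,Y]+\mathcal L_X\eta-\mathcal L_Y\xi-\tfrac12 d(\iota_X\eta-\iota_Y\xi)$, and bracket $[X+\xi,Y+\eta]_\nabla=[X,Y]+\nabla_X\eta-\nabla_Y\xi$. The induced generalized connection is $\tilde\nabla_{X+\xi}(Y+\eta)=\nabla_XY+\nabla_X\eta$. Its torsion with respect to the Courant bracket is the trilinear form $T^{\tilde\nabla}(v,w,u)=\langle\tilde\nabla_vw-\tilde\nabla_wv-[v,w]_C,u\rangle+\tfrac12(\langle\tilde\nabla_uv,w\rangle-\langle\tilde\nabla_uw,v\rangle)$, and its torsion with respect to $[\cdot,\cdot]_\nabla$ is $T^{\tilde\nabla}_{[\cdot,\cdot]_\nabla}(v,w)=\tilde\nabla_vw-\tilde\nabla_wv-[v,w]_\nabla$. *)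

theory Defs
  imports "HOL-Analysis.Analysis"
begin

fun Ck_on :: "nat \<Rightarrow> 'e::real_normed_vector set \<Rightarrow> ('e \<Rightarrow> 'b::real_normed_vector) \<Rightarrow> bool" where
  "Ck_on 0 S f = continuous_on S f"
| "Ck_on (Suc k) S f =
     (\<exists>f'. (\<forall>x\<in>S. (f has_derivative f' x) (at x)) \<and> (\<forall>v. Ck_on k S (\<lambda>x. f' x v)))"

definition smooth_on :: "'e::real_normed_vector set \<Rightarrow> ('e \<Rightarrow> 'b::real_normed_vector) \<Rightarrow> bool" where
  "smooth_on S f \<longleftrightarrow> (\<forall>k. Ck_on k S f)"

text \<open>A chart is a triple (U, phi, psi): U open in M, phi maps U homeomorphically
  onto the open set phi ` U of the model space 'e, with inverse psi.\<close>
type_synonym ('a,'e) chart = "'a set \<times> ('a \<Rightarrow> 'e) \<times> ('e \<Rightarrow> 'a)"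

definition is_chart :: "('a::topological_space, 'e::euclidean_space) chart \<Rightarrow> bool" where
  "is_chart c \<longleftrightarrow> (case c of (U, \<phi>, \<psi>) \<Rightarrow>
      open U \<and> open (\<phi> ` U) \<and> homeomorphism U (\<phi> ` U) \<phi> \<psi>)"

text \<open>The manifold is the whole space of type 'a (Hausdorff, second countable);
  the smooth structure is given by a smooth atlas A.\<close>
definition smooth_atlas :: "('a::{t2_space,second_countable_topology}, 'e::euclidean_space) chart set \<Rightarrow> bool" where
  "smooth_atlas A \<longleftrightarrow>
     (\<forall>c\<in>A. is_chart c) \<and>
     (\<Union>(U,\<phi>,\<psi>)\<in>A. U) = UNIV \<and>
     (\<forall>(U1,\<phi>1,\<psi>1)\<in>A. \<forall>(U2,\<phi>2,\<psi>2)\<in>A.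
        smooth_on (\<phi>1 ` (U1 \<inter> U2)) (\<phi>2 \<circ> \<psi>1))"

definition smooth_fun :: "('a, 'e::euclidean_space) chart set \<Rightarrow> ('a \<Rightarrow> real) \<Rightarrow> bool" where
  "smooth_fun A f \<longleftrightarrow> (\<forall>(U,\<phi>,\<psi>)\<in>A. smooth_on (\<phi> ` U) (f \<circ> \<psi>))"

text \<open>Smooth vector fields are the derivations of C-infinity(M)
  (extended by 0 outside C-infinity(M) to make them canonical).\<close>
type_synonym 'a vfield = "('a \<Rightarrow> real) \<Rightarrow> ('a \<Rightarrow> real)"
type_synonym 'a form1 = "'a vfield \<Rightarrow> ('a \<Rightarrow> real)"
type_synonym 'a sect = "'a vfield \<times> 'a form1"

definition vfield :: "('a, 'e::euclidean_space) chart set \<Rightarrow> 'a vfield \<Rightarrow> bool" where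
  "vfield A X \<longleftrightarrow>
     (\<forall>f. smooth_fun A f \<longrightarrow> smooth_fun A (X f)) \<and>
     (\<forall>f g. smooth_fun A f \<longrightarrow> smooth_fun A g \<longrightarrow> X (\<lambda>x. f x + g x) = (\<lambda>x. X f x + X g x)) \<and>
     (\<forall>c f. smooth_fun A f \<longrightarrow> X (\<lambda>x. c * f x) = (\<lambda>x. c * X f x)) \<and>
     (\<forall>f g. smooth_fun A f \<longrightarrow> smooth_fun A g \<longrightarrow>
        X (\<lambda>x. f x * g x) = (\<lambda>x. f x * X g x + g x * X f x)) \<and>
     (\<forall>f. \<not> smooth_fun A f \<longrightarrow> X f = (\<lambda>x. 0))"

definition vzero :: "'a vfield" where "vzero = (\<lambda>f x. 0)"
definition vadd :: "'a vfield \<Rightarrow> 'a vfield \<Rightarrow> 'a vfield" where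
  "vadd X Y = (\<lambda>f x. X f x + Y f x)"
definition vsub :: "'a vfield \<Rightarrow> 'a vfield \<Rightarrow> 'a vfield" where
  "vsub X Y = (\<lambda>f x. X f x - Y f x)"
definition vscale :: "('a \<Rightarrow> real) \<Rightarrow> 'a vfield \<Rightarrow> 'a vfield" where
  "vscale h X = (\<lambda>f x. h x * X f x)"

definition lie :: "'a vfield \<Rightarrow> 'a vfield \<Rightarrow> 'a vfield" where
  "lie X Y = (\<lambda>f x. X (Y f) x - Y (X f) x)"

text \<open>Smooth 1-forms: C-infinity(M)-linear maps from vector fields to C-infinity(M)
  (extended by 0 outside the vector fields).\<close>
definition form1 :: "('a, 'e::euclidean_space) chart set \<Rightarrow> 'a form1 \<Rightarrow> bool" where
  "form1 A \<xi> \<longleftrightarrow>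
     (\<forall>X. vfield A X \<longrightarrow> smooth_fun A (\<xi> X)) \<and>
     (\<forall>X Y. vfield A X \<longrightarrow> vfield A Y \<longrightarrow> \<xi> (vadd X Y) = (\<lambda>x. \<xi> X x + \<xi> Y x)) \<and>
     (\<forall>h X. smooth_fun A h \<longrightarrow> vfield A X \<longrightarrow> \<xi> (vscale h X) = (\<lambda>x. h x * \<xi> X x)) \<and>
     (\<forall>X. \<not> vfield A X \<longrightarrow> \<xi> X = (\<lambda>x. 0))"

definition fzero :: "'a form1" where "fzero = (\<lambda>Y x. 0)"
definition fadd :: "'a form1 \<Rightarrow> 'a form1 \<Rightarrow> 'a form1" where
  "fadd \<xi> \<eta> = (\<lambda>Y x. \<xi> Y x + \<eta> Y x)"
definition fsub :: "'a form1 \<Rightarrow> 'a form1 \<Rightarrow> 'a form1" where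
  "fsub \<xi> \<eta> = (\<lambda>Y x. \<xi> Y x - \<eta> Y x)"

definition dfun :: "('a, 'e::euclidean_space) chart set \<Rightarrow> ('a \<Rightarrow> real) \<Rightarrow> 'a form1" where
  "dfun A f = (\<lambda>Y. if vfield A Y then Y f else (\<lambda>x. 0))"

definition iota :: "'a vfield \<Rightarrow> 'a form1 \<Rightarrow> ('a \<Rightarrow> real)" where
  "iota X \<xi> = \<xi> X"

definition lie_form :: "('a, 'e::euclidean_space) chart set \<Rightarrow> 'a vfield \<Rightarrow> 'a form1 \<Rightarrow> 'a form1" where
  "lie_form A X \<eta> = (\<lambda>Y. if vfield A Y then (\<lambda>x. X (\<eta> Y) x - \<eta> (lie X Y) x) else (\<lambda>x. 0))"

definition affine_connection :: "('a, 'e::euclidean_space) chart set \<Rightarrow> ('a vfield \<Rightarrow> 'a vfield \<Rightarrow> 'a vfield) \<Rightarrow> bool" where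
  "affine_connection A nabla \<longleftrightarrow>
     (\<forall>X Y. vfield A X \<longrightarrow> vfield A Y \<longrightarrow> vfield A (nabla X Y)) \<and>
     (\<forall>X1 X2 Y. vfield A X1 \<longrightarrow> vfield A X2 \<longrightarrow> vfield A Y \<longrightarrow>
        nabla (vadd X1 X2) Y = vadd (nabla X1 Y) (nabla X2 Y)) \<and>
     (\<forall>h X Y. smooth_fun A h \<longrightarrow> vfield A X \<longrightarrow> vfield A Y \<longrightarrow>
        nabla (vscale h X) Y = vscale h (nabla X Y)) \<and>
     (\<forall>X Y1 Y2. vfield A X \<longrightarrow> vfield A Y1 \<longrightarrow> vfield A Y2 \<longrightarrow>
        nabla X (vadd Y1 Y2) = vadd (nabla X Y1) (nabla X Y2)) \<and>
     (\<forall>h X Y. smooth_fun A h \<longrightarrow> vfield A X \<longrightarrow> vfield A Y \<longrightarrow>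
        nabla X (vscale h Y) = vadd (vscale (X h) Y) (vscale h (nabla X Y)))"

definition torsion_free :: "('a, 'e::euclidean_space) chart set \<Rightarrow> ('a vfield \<Rightarrow> 'a vfield \<Rightarrow> 'a vfield) \<Rightarrow> bool" where
  "torsion_free A nabla \<longleftrightarrow>
     (\<forall>X Y. vfield A X \<longrightarrow> vfield A Y \<longrightarrow>
        vsub (vsub (nabla X Y) (nabla Y X)) (lie X Y) = vzero)"

definition nabla_form :: "('a, 'e::euclidean_space) chart set \<Rightarrow> ('a vfield \<Rightarrow> 'a vfield \<Rightarrow> 'a vfield)
    \<Rightarrow> 'a vfield \<Rightarrow> 'a form1 \<Rightarrow> 'a form1" where
  "nabla_form A nabla X \<eta> =
     (\<lambda>Y. if vfield A Y then (\<lambda>x. X (\<eta> Y) x - \<eta> (nabla X Y) x) else (\<lambda>x. 0))"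

definition section_E :: "('a, 'e::euclidean_space) chart set \<Rightarrow> 'a sect \<Rightarrow> bool" where
  "section_E A v \<longleftrightarrow> vfield A (fst v) \<and> form1 A (snd v)"

definition szero :: "'a sect" where "szero = (vzero, fzero)"
definition ssub :: "'a sect \<Rightarrow> 'a sect \<Rightarrow> 'a sect" where
  "ssub v w = (vsub (fst v) (fst w), fsub (snd v) (snd w))"

definition pairing :: "'a sect \<Rightarrow> 'a sect \<Rightarrow> ('a \<Rightarrow> real)" where
  "pairing v w = (\<lambda>x. iota (fst v) (snd w) x + iota (fst w) (snd v) x)"

definition courant :: "('a, 'e::euclidean_space) chart set \<Rightarrow> 'a sect \<Rightarrow> 'a sect \<Rightarrow> 'a sect" where
  "courant A v w = (case v of (X, \<xi>) \<Rightarrow> case w of (Y, \<eta>) \<Rightarrow>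
     (lie X Y,
      fsub (fsub (lie_form A X \<eta>) (lie_form A Y \<xi>))
           (dfun A (\<lambda>x. (1/2) * (iota X \<eta> x - iota Y \<xi> x)))))"

definition nabla_bracket :: "('a, 'e::euclidean_space) chart set \<Rightarrow> ('a vfield \<Rightarrow> 'a vfield \<Rightarrow> 'a vfield)
    \<Rightarrow> 'a sect \<Rightarrow> 'a sect \<Rightarrow> 'a sect" where
  "nabla_bracket A nabla v w = (case v of (X, \<xi>) \<Rightarrow> case w of (Y, \<eta>) \<Rightarrow>
     (lie X Y, fsub (nabla_form A nabla X \<eta>) (nabla_form A nabla Y \<xi>)))"

definition gen_conn :: "('a, 'e::euclidean_space) chart set \<Rightarrow> ('a vfield \<Rightarrow> 'a vfield \<Rightarrow> 'a vfield)
    \<Rightarrow> 'a sect \<Rightarrow> 'a sect \<Rightarrow> 'a sect" where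
  "gen_conn A nabla v w = (nabla (fst v) (fst w), nabla_form A nabla (fst v) (snd w))"

definition torsion_courant :: "('a, 'e::euclidean_space) chart set \<Rightarrow> ('a vfield \<Rightarrow> 'a vfield \<Rightarrow> 'a vfield)
    \<Rightarrow> 'a sect \<Rightarrow> 'a sect \<Rightarrow> 'a sect \<Rightarrow> ('a \<Rightarrow> real)" where
  "torsion_courant A nabla v w u =
     (\<lambda>x. pairing (ssub (ssub (gen_conn A nabla v w) (gen_conn A nabla w v)) (courant A v w)) u x
        + (1/2) * (pairing (gen_conn A nabla u v) w x - pairing (gen_conn A nabla u w) v x))"

definition torsion_nabla :: "('a, 'e::euclidean_space) chart set \<Rightarrow> ('a vfield \<Rightarrow> 'a vfield \<Rightarrow> 'a vfield)
    \<Rightarrow> 'a sect \<Rightarrow> 'a sect \<Rightarrow> 'a sect" where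
  "torsion_nabla A nabla v w =
     ssub (ssub (gen_conn A nabla v w) (gen_conn A nabla w v)) (nabla_bracket A nabla v w)"

end

theory Submission
  imports Defs
begin

text \<open>
  Let \<open>T(X, Y) = \<nabla>\<^sub>X Y - \<nabla>\<^sub>Y X - [X, Y]\<close> be the torsion of \<open>\<nabla>\<close> and write
  \<open>v = X + \<xi>\<close>, \<open>w = Y + \<eta>\<close>, \<open>u = Z + \<zeta>\<close>. The form parts of \<open>\<nabla>\<^sub>X \<eta> - \<nabla>\<^sub>Y \<xi>\<close> cancel in
  the torsion with respect to \<open>[\<cdot>,\<cdot>]\<^sub>\<nabla>\<close>, which is therefore just \<open>T(X, Y)\<close>. In the torsion
  with respect to the Courant bracket, \<open>\<nabla>\<^sub>X \<eta> - \<L>\<^sub>X \<eta>\<close> evaluated at \<open>Z\<close> is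
  \<open>-\<eta>(\<nabla>\<^sub>Z X) - \<eta>(T(X, Z))\<close>, and the terms \<open>\<eta>(\<nabla>\<^sub>Z X)\<close>, \<open>\<xi>(\<nabla>\<^sub>Z Y)\<close> and
  \<open>Z(\<eta>(X))\<close>, \<open>Z(\<xi>(Y))\<close> cancel against the symmetrisation term and the exact term of the
  bracket, leaving \<open>\<zeta>(T(X, Y)) - \<eta>(T(X, Z)) + \<xi>(T(Y, Z))\<close>. So the two torsions agree
  iff the last two terms always cancel, and testing with \<open>\<xi> = 0\<close>, \<open>\<eta> = d f\<close> shows that this
  forces \<open>T = 0\<close>. Everything is algebra over \<open>C\<^sup>\<infinity>(M)\<close>.
\<close>

lemma Ck_on_const: "Ck_on k S (\<lambda>x. c::real)"
  by (induction k arbitrary: c) (auto intro!: exI[of _ "\<lambda>x v. 0"])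

lemma Ck_on_add: "Ck_on k S f \<Longrightarrow> Ck_on k S g \<Longrightarrow> Ck_on k S (\<lambda>x. f x + (g x::real))"
proof (induction k arbitrary: f g)
  case 0
  then show ?case by (simp add: continuous_on_add)
next
  case (Suc k)
  then obtain f' g' where
    "\<forall>x\<in>S. (f has_derivative f' x) (at x)" "\<forall>v. Ck_on k S (\<lambda>x. f' x v)"
    "\<forall>x\<in>S. (g has_derivative g' x) (at x)" "\<forall>v. Ck_on k S (\<lambda>x. g' x v)"
    by auto
  with Suc.IH show ?case
    by (auto intro!: exI[of _ "\<lambda>x v. f' x v + g' x v"] has_derivative_add)
qed

lemma Ck_on_SucD: "Ck_on (Suc k) S f \<Longrightarrow> Ck_on k S f"
proof (induction k arbitrary: f)
  case 0
  then show ?case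
    by (auto intro!: continuous_at_imp_continuous_on dest: has_derivative_continuous)
next
  case (Suc k)
  then show ?case by (metis Ck_on.simps(2))
qed

lemma Ck_on_mult: "Ck_on k S f \<Longrightarrow> Ck_on k S g \<Longrightarrow> Ck_on k S (\<lambda>x. f x * (g x::real))"
proof (induction k arbitrary: f g)
  case 0
  then show ?case by (simp add: continuous_on_mult)
next
  case (Suc k)
  then obtain f' g' where
    "\<forall>x\<in>S. (f has_derivative f' x) (at x)" "\<forall>v. Ck_on k S (\<lambda>x. f' x v)"
    "\<forall>x\<in>S. (g has_derivative g' x) (at x)" "\<forall>v. Ck_on k S (\<lambda>x. g' x v)"
    by auto
  moreover have "Ck_on k S f" "Ck_on k S g"
    using Suc.prems Ck_on_SucD by blast+
  ultimately show ?case
    using Suc.IH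
    by (auto intro!: exI[of _ "\<lambda>x v. f x * g' x v + f' x v * g x"] has_derivative_mult Ck_on_add)
qed

lemma smooth_fun_const: "smooth_fun A (\<lambda>x. c)"
  by (simp add: smooth_fun_def smooth_on_def o_def Ck_on_const)

lemma smooth_fun_add: "smooth_fun A f \<Longrightarrow> smooth_fun A g \<Longrightarrow> smooth_fun A (\<lambda>x. f x + g x)"
  unfolding smooth_fun_def smooth_on_def o_def by (fastforce intro: Ck_on_add)

lemma smooth_fun_mult: "smooth_fun A f \<Longrightarrow> smooth_fun A g \<Longrightarrow> smooth_fun A (\<lambda>x. f x * g x)"
  unfolding smooth_fun_def smooth_on_def o_def by (fastforce intro: Ck_on_mult)

lemma smooth_fun_cmult: "smooth_fun A f \<Longrightarrow> smooth_fun A (\<lambda>x. c * f x)"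
  by (rule smooth_fun_mult[OF smooth_fun_const])

lemma smooth_fun_diff: "smooth_fun A f \<Longrightarrow> smooth_fun A g \<Longrightarrow> smooth_fun A (\<lambda>x. f x - g x)"
  using smooth_fun_add[OF _ smooth_fun_cmult[of A g "-1"], of f] by simp

lemma
  assumes "vfield A X"
  shows vfield_apply_smooth: "smooth_fun A f \<Longrightarrow> smooth_fun A (X f)"
    and vfield_apply_add:
      "smooth_fun A f \<Longrightarrow> smooth_fun A g \<Longrightarrow> X (\<lambda>x. f x + g x) = (\<lambda>x. X f x + X g x)"
    and vfield_apply_cmult: "smooth_fun A f \<Longrightarrow> X (\<lambda>x. c * f x) = (\<lambda>x. c * X f x)"
    and vfield_apply_mult:
      "smooth_fun A f \<Longrightarrow> smooth_fun A g \<Longrightarrow> X (\<lambda>x. f x * g x) = (\<lambda>x. f x * X g x + g x * X f x)"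
    and vfield_apply_nonsmooth: "\<not> smooth_fun A f \<Longrightarrow> X f = (\<lambda>x. 0)"
  using assms by (simp_all add: vfield_def)

lemma vfield_apply_zero: "vfield A X \<Longrightarrow> X (\<lambda>x. 0) = (\<lambda>x. 0)"
  using vfield_apply_cmult[OF _ smooth_fun_const, of A X 0 0] by simp

lemma vfield_apply_diff:
  assumes "vfield A X" "smooth_fun A f" "smooth_fun A g"
  shows "X (\<lambda>x. f x - g x) = (\<lambda>x. X f x - X g x)"
  using vfield_apply_add[OF assms(1,2) smooth_fun_cmult[OF assms(3)], of "-1"]
    vfield_apply_cmult[OF assms(1,3), of "-1"]
  by simp

lemma vfield_vzero: "vfield A vzero"
  by (simp add: vfield_def vzero_def smooth_fun_const)

lemma vfield_vadd:
  assumes "vfield A X" "vfield A Y"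
  shows "vfield A (vadd X Y)"
  unfolding vfield_def vadd_def
  using assms
  by (simp add: vfield_apply_smooth vfield_apply_add vfield_apply_cmult vfield_apply_mult
      vfield_apply_nonsmooth smooth_fun_add algebra_simps)

lemma vfield_vscale:
  assumes "vfield A X" "smooth_fun A h"
  shows "vfield A (vscale h X)"
  unfolding vfield_def vscale_def
  using assms
  by (simp add: vfield_apply_smooth vfield_apply_add vfield_apply_cmult vfield_apply_mult
      vfield_apply_nonsmooth smooth_fun_mult algebra_simps)

lemma vfield_vsub:
  assumes "vfield A X" "vfield A Y"
  shows "vfield A (vsub X Y)"
  unfolding vfield_def vsub_def
  using assms
  by (simp add: vfield_apply_smooth vfield_apply_add vfield_apply_cmult vfield_apply_mult
      vfield_apply_nonsmooth smooth_fun_diff algebra_simps)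

lemma vfield_lie:
  assumes X: "vfield A X" and Y: "vfield A Y"
  shows "vfield A (lie X Y)"
  unfolding vfield_def
proof (intro conjI allI impI)
  fix f g :: "'a \<Rightarrow> real" and c :: real
  assume f: "smooth_fun A f"
  note smooth = f vfield_apply_smooth[OF X] vfield_apply_smooth[OF Y]
  show "smooth_fun A (lie X Y f)"
    unfolding lie_def by (intro smooth_fun_diff smooth)
  show "lie X Y (\<lambda>x. c * f x) = (\<lambda>x. c * lie X Y f x)"
    using smooth
    by (simp add: lie_def vfield_apply_cmult[OF X] vfield_apply_cmult[OF Y] right_diff_distrib)
  assume g: "smooth_fun A g"
  note smooth = smooth g
  show "lie X Y (\<lambda>x. f x + g x) = (\<lambda>x. lie X Y f x + lie X Y g x)"
    using smooth by (simp add: lie_def vfield_apply_add[OF X] vfield_apply_add[OF Y] algebra_simps)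
  have "X (Y (\<lambda>x. f x * g x)) = (\<lambda>x. f x * X (Y g) x + Y g x * X f x + (g x * X (Y f) x + Y f x * X g x))"
    using smooth by (simp add: vfield_apply_mult[OF Y] vfield_apply_add[OF X] vfield_apply_mult[OF X]
        smooth_fun_mult)
  moreover have "Y (X (\<lambda>x. f x * g x)) = (\<lambda>x. f x * Y (X g) x + X g x * Y f x + (g x * Y (X f) x + X f x * Y g x))"
    using smooth by (simp add: vfield_apply_mult[OF X] vfield_apply_add[OF Y] vfield_apply_mult[OF Y]
        smooth_fun_mult)
  ultimately show "lie X Y (\<lambda>x. f x * g x) = (\<lambda>x. f x * lie X Y g x + g x * lie X Y f x)"
    by (simp add: lie_def algebra_simps)
next
  fix f :: "'a \<Rightarrow> real"
  assume "\<not> smooth_fun A f"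
  then show "lie X Y f = (\<lambda>x. 0)"
    by (simp add: lie_def vfield_apply_nonsmooth[OF X] vfield_apply_nonsmooth[OF Y]
        vfield_apply_zero[OF X] vfield_apply_zero[OF Y])
qed

lemma
  assumes "form1 A \<xi>"
  shows form1_apply_smooth: "vfield A X \<Longrightarrow> smooth_fun A (\<xi> X)"
    and form1_apply_vadd:
      "vfield A X \<Longrightarrow> vfield A Y \<Longrightarrow> \<xi> (vadd X Y) = (\<lambda>x. \<xi> X x + \<xi> Y x)"
    and form1_apply_vscale:
      "smooth_fun A h \<Longrightarrow> vfield A X \<Longrightarrow> \<xi> (vscale h X) = (\<lambda>x. h x * \<xi> X x)"
  using assms by (simp_all add: form1_def)

lemma form1_apply_vzero: "form1 A \<xi> \<Longrightarrow> \<xi> vzero = (\<lambda>x. 0)"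
  using form1_apply_vscale[OF _ smooth_fun_const vfield_vzero, of A \<xi> 0]
  by (simp add: vscale_def vzero_def)

lemma form1_apply_vsub:
  assumes \<xi>: "form1 A \<xi>" and X: "vfield A X" and Y: "vfield A Y"
  shows "\<xi> (vsub X Y) = (\<lambda>x. \<xi> X x - \<xi> Y x)"
proof -
  have "vsub X Y = vadd X (vscale (\<lambda>_. -1) Y)"
    by (simp add: vsub_def vadd_def vscale_def)
  then show ?thesis
    using form1_apply_vadd[OF \<xi> X vfield_vscale[OF Y smooth_fun_const]]
      form1_apply_vscale[OF \<xi> smooth_fun_const Y]
    by simp
qed

lemma form1_fzero: "form1 A fzero"
  by (simp add: form1_def fzero_def smooth_fun_const)

lemma form1_dfun: "form1 A (dfun A f)"
proof -
  have "smooth_fun A (X f)" if "vfield A X" for X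
    using that by (cases "smooth_fun A f") (simp_all add: vfield_apply_smooth
        vfield_apply_nonsmooth smooth_fun_const)
  then show ?thesis
    by (simp add: form1_def dfun_def vfield_vadd vfield_vscale) (simp add: vadd_def vscale_def)
qed

definition torsion :: "('a vfield \<Rightarrow> 'a vfield \<Rightarrow> 'a vfield) \<Rightarrow> 'a vfield \<Rightarrow> 'a vfield \<Rightarrow> 'a vfield"
  where "torsion nabla X Y = vsub (vsub (nabla X Y) (nabla Y X)) (lie X Y)"

lemma torsion_free_iff_torsion_eq_vzero:
  "torsion_free A nabla \<longleftrightarrow> (\<forall>X Y. vfield A X \<longrightarrow> vfield A Y \<longrightarrow> torsion nabla X Y = vzero)"
  by (simp add: torsion_free_def torsion_def)

lemma affine_connection_vfield:
  "affine_connection A nabla \<Longrightarrow> vfield A X \<Longrightarrow> vfield A Y \<Longrightarrow> vfield A (nabla X Y)"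
  by (simp add: affine_connection_def)

lemma vfield_torsion:
  "affine_connection A nabla \<Longrightarrow> vfield A X \<Longrightarrow> vfield A Y \<Longrightarrow> vfield A (torsion nabla X Y)"
  by (simp add: torsion_def vfield_vsub vfield_lie affine_connection_vfield)

lemma form1_apply_torsion:
  assumes "form1 A \<xi>" "affine_connection A nabla" "vfield A X" "vfield A Y"
  shows "\<xi> (torsion nabla X Y) = (\<lambda>x. \<xi> (nabla X Y) x - \<xi> (nabla Y X) x - \<xi> (lie X Y) x)"
  using assms
  by (simp add: torsion_def form1_apply_vsub vfield_vsub vfield_lie affine_connection_vfield)

lemma torsion_nabla_eq: "torsion_nabla A nabla v w = (torsion nabla (fst v) (fst w), fzero)"
  by (simp add: torsion_nabla_def ssub_def gen_conn_def nabla_bracket_def torsion_def fsub_def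
      fzero_def split: prod.split)

lemma pairing_torsion_nabla: "pairing (torsion_nabla A nabla v w) u = snd u (torsion nabla (fst v) (fst w))"
  by (simp add: torsion_nabla_eq pairing_def iota_def fzero_def)

lemma torsion_courant_eq:
  assumes nabla: "affine_connection A nabla"
    and v: "section_E A (X, \<xi>)" and w: "section_E A (Y, \<eta>)" and u: "section_E A (Z, \<zeta>)"
  shows "torsion_courant A nabla (X, \<xi>) (Y, \<eta>) (Z, \<zeta>) =
    (\<lambda>x. \<zeta> (torsion nabla X Y) x - \<eta> (torsion nabla X Z) x + \<xi> (torsion nabla Y Z) x)"
proof -
  from v w u have X: "vfield A X" and Y: "vfield A Y" and Z: "vfield A Z"
    and \<xi>: "form1 A \<xi>" and \<eta>: "form1 A \<eta>"
    by (simp_all add: section_E_def)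
  have dZ: "Z (\<lambda>x. 1 / 2 * (\<eta> X x - \<xi> Y x)) = (\<lambda>x. 1 / 2 * (Z (\<eta> X) x - Z (\<xi> Y) x))"
    using X Y \<xi> \<eta>
    by (simp only: vfield_apply_cmult[OF Z] vfield_apply_diff[OF Z] smooth_fun_diff form1_apply_smooth)
  \<comment> \<open>\<open>times_divide_eq_left\<close> would turn \<open>1 / 2 * _\<close> into \<open>_ / 2\<close> before \<open>dZ\<close> can match.\<close>
  show ?thesis
    using X Y Z affine_connection_vfield[OF nabla]
    by (simp add: torsion_courant_def pairing_def ssub_def gen_conn_def courant_def iota_def
        fsub_def lie_form_def nabla_form_def dfun_def dZ torsion_def[symmetric]
        form1_apply_torsion[OF \<eta> nabla X Z] form1_apply_torsion[OF \<xi> nabla Y Z] del: times_divide_eq_left)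
      (simp add: algebra_simps)
qed

lemma torsion_free_iff_torsion_nabla_eq_szero:
  "torsion_free A nabla \<longleftrightarrow>
    (\<forall>v w. section_E A v \<longrightarrow> section_E A w \<longrightarrow> torsion_nabla A nabla v w = szero)"
proof
  assume "torsion_free A nabla"
  then show "\<forall>v w. section_E A v \<longrightarrow> section_E A w \<longrightarrow> torsion_nabla A nabla v w = szero"
    by (simp add: torsion_free_iff_torsion_eq_vzero torsion_nabla_eq szero_def section_E_def)
next
  assume "\<forall>v w. section_E A v \<longrightarrow> section_E A w \<longrightarrow> torsion_nabla A nabla v w = szero"
  then have "torsion_nabla A nabla (X, fzero) (Y, fzero) = szero"
    if "vfield A X" "vfield A Y" for X Y
    using that by (simp add: section_E_def form1_fzero)
  then show "torsion_free A nabla"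
    by (simp add: torsion_free_iff_torsion_eq_vzero torsion_nabla_eq szero_def)
qed

lemma torsion_courant_eq_zero_if_torsion_free:
  assumes "affine_connection A nabla" "torsion_free A nabla"
    and "section_E A u" "section_E A v" "section_E A w"
  shows "torsion_courant A nabla v w u = (\<lambda>x. 0)"
  using assms torsion_courant_eq[OF assms(1), of "fst v" "snd v" "fst w" "snd w" "fst u" "snd u"]
    form1_apply_vzero[of A "snd u"] form1_apply_vzero[of A "snd v"] form1_apply_vzero[of A "snd w"]
  by (simp add: torsion_free_iff_torsion_eq_vzero section_E_def)

lemma torsion_free_if_torsion_courant_eq_pairing:
  assumes nabla: "affine_connection A nabla"
    and eq: "\<forall>u v w. section_E A u \<longrightarrow> section_E A v \<longrightarrow> section_E A w \<longrightarrow>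
      torsion_courant A nabla v w u = pairing (torsion_nabla A nabla v w) u"
  shows "torsion_free A nabla"
  unfolding torsion_free_iff_torsion_eq_vzero
proof (intro allI impI ext)
  fix X Z f x
  assume X: "vfield A X" and Z: "vfield A Z"
  show "torsion nabla X Z f x = vzero f x"
  proof (cases "smooth_fun A f")
    case True
    have sections: "section_E A (X, fzero)" "section_E A (vzero, dfun A f)" "section_E A (Z, fzero)"
      using X Z by (simp_all add: section_E_def vfield_vzero form1_fzero form1_dfun)
    have "dfun A f (torsion nabla X Z) x = 0"
      using eq[rule_format, OF sections(3,1,2)]
        torsion_courant_eq[OF nabla sections(1,2,3)]
      by (simp add: pairing_torsion_nabla fzero_def fun_eq_iff)
    then show ?thesis
      by (simp add: dfun_def vfield_torsion[OF nabla X Z] vzero_def)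
  next
    case False
    then show ?thesis
      by (simp add: vfield_apply_nonsmooth[OF vfield_torsion[OF nabla X Z]] vzero_def)
  qed
qed

lemma pairing_szero: "section_E A u \<Longrightarrow> pairing szero u = (\<lambda>x. 0)"
  using form1_apply_vzero[of A "snd u"]
  by (simp add: pairing_def szero_def iota_def fzero_def section_E_def)

lemma torsion_courant_eq_pairing_iff_torsion_free:
  assumes "affine_connection A nabla"
  shows "(\<forall>u v w. section_E A u \<longrightarrow> section_E A v \<longrightarrow> section_E A w \<longrightarrow>
      torsion_courant A nabla v w u = pairing (torsion_nabla A nabla v w) u) \<longleftrightarrow>
    torsion_free A nabla"
proof (intro iffI allI impI)
  fix u v w
  assume "torsion_free A nabla" "section_E A u" "section_E A v" "section_E A w"
  moreover from this have "torsion_nabla A nabla v w = szero"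
    using torsion_free_iff_torsion_nabla_eq_szero by blast
  ultimately show "torsion_courant A nabla v w u = pairing (torsion_nabla A nabla v w) u"
    by (simp add: torsion_courant_eq_zero_if_torsion_free[OF assms] pairing_szero)
qed (rule torsion_free_if_torsion_courant_eq_pairing[OF assms])

theorem corollary4p3p1:
  fixes A :: "('a::{t2_space,second_countable_topology}, 'e::euclidean_space) chart set"
    and nabla :: "'a vfield \<Rightarrow> 'a vfield \<Rightarrow> 'a vfield"
  assumes "smooth_atlas A"
    and "affine_connection A nabla"
  shows "((\<forall>u v w. section_E A u \<longrightarrow> section_E A v \<longrightarrow> section_E A w \<longrightarrow>
             torsion_courant A nabla v w u = pairing (torsion_nabla A nabla v w) u)
          \<longleftrightarrow>
          ((\<forall>u v w. section_E A u \<longrightarrow> section_E A v \<longrightarrow> section_E A w \<longrightarrow>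
              torsion_courant A nabla v w u = (\<lambda>x. 0)) \<and>
           (\<forall>v w. section_E A v \<longrightarrow> section_E A w \<longrightarrow> torsion_nabla A nabla v w = szero)))
       \<and>
         (((\<forall>u v w. section_E A u \<longrightarrow> section_E A v \<longrightarrow> section_E A w \<longrightarrow>
              torsion_courant A nabla v w u = (\<lambda>x. 0)) \<and>
           (\<forall>v w. section_E A v \<longrightarrow> section_E A w \<longrightarrow> torsion_nabla A nabla v w = szero))
          \<longleftrightarrow> torsion_free A nabla)"
  using torsion_courant_eq_pairing_iff_torsion_free[OF assms(2)]
    torsion_courant_eq_zero_if_torsion_free[OF assms(2)]
    torsion_free_iff_torsion_nabla_eq_szero[of A nabla]
  by blast

end
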